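(* Let $\Phi=\phi_1\wedge\cdots\wedge\phi_m$ be a satisfiable extremal instance, meaning $\Pr_{\mathcal D}(\Phi)>0$. For each $k\in[m]$, the expected number of iterations of $\mathrm{PRS}(\Phi,\mathcal D)$ in which the scope of $\phi_k$ is resampled equals $q_{\{k\}}/q_\emptyset$. This holds for any rule used to choose the false clause.
   Context: Setting: For $i\in[n]$, $X_i$ takes values in a countable set $D_i$ with probability distribution $\mathcal D_i$; $\mathcal D=\prod_i\mathcal D_i$ is the product distribution. $\Phi=\phi_1\wedge\cdots\wedge\phi_m$, where clause $\phi_k$ is a Boolean function of the variables with indices in its nonempty scope $\mathrm{Scp}(\phi_k)\subseteq[n]$. $\Phi$ is extremal if for all $k\neq\ell$ with $\mathrm{Scp}(\phi_k)\cap\mathrm{Scp}(\phi_\ell)\ne\emptyset$, the formula $\phi_k\vee\phi_\ell$ is true under every assignment. Algorithm $\mathrm{PRS}(\Phi,\mathcal D)$: sample $\mathbf X$ from $\mathcal D$. While $\Phi(\mathbf X)$ is false, choose (by any rule) a clause $\phi_k$ false under the current $\mathbf X$ and resample all $X_i$, $i\in\mathrm{Scp}(\phi_k)$, independently from $\mathcal D_i$. Notation: $\Gamma$ is the dependency graph on $[m]$, with $k\sim\ell$ ($k\ne\ell$) iff $\mathrm{Scp}(\phi_k)\cap\mathrm{Scp}(\phi_\ell)\neq\emptyset$. $\mathcal I(\Gamma)$ is its set of independent sets, including $\emptyset$. $p_k=\Pr_{\mathcal D}(\neg\phi_k)$ and $p_I=\prod_{k\in I}p_k$. For $S\subseteq[m]$,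 $q_S=\sum_{I\in\mathcal I(\Gamma),\,I\supseteq S}(-1)^{|I\setminus S|}p_I$. *)

theory Defs
  imports "HOL-Probability.Probability"
begin

text \<open>Variables are indexed by i < n; an assignment is a function nat => 'a
  (values outside {..<n} are irrelevant).\<close>

type_synonym 'a asg = "nat \<Rightarrow> 'a"

text \<open>History of a run of PRS: the initial assignment together with the list
  of performed resampling steps (clause index, assignment after the step),
  most recent step first.\<close>
type_synonym 'a hist = "'a asg \<times> (nat \<times> 'a asg) list"

definition cur_asg :: "'a hist \<Rightarrow> 'a asg" where
  "cur_asg h = (case snd h of [] \<Rightarrow> fst h | (k, x) # _ \<Rightarrow> x)"

definition Phi :: "nat \<Rightarrow> (nat \<Rightarrow> 'a asg \<Rightarrow> bool) \<Rightarrow> 'a asg \<Rightarrow> bool" where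
  "Phi m phi x = (\<forall>k<m. phi k x)"

definition prod_dist :: "nat \<Rightarrow> (nat \<Rightarrow> 'a pmf) \<Rightarrow> 'a asg pmf" where
  "prod_dist n D = Pi_pmf {..<n} undefined D"

definition resample :: "(nat \<Rightarrow> 'a pmf) \<Rightarrow> nat set \<Rightarrow> 'a asg \<Rightarrow> 'a asg pmf" where
  "resample D T x = map_pmf (\<lambda>y i. if i \<in> T then y i else x i) (Pi_pmf T undefined D)"

definition prs_step ::
  "nat \<Rightarrow> (nat \<Rightarrow> 'a asg \<Rightarrow> bool) \<Rightarrow> (nat \<Rightarrow> nat set) \<Rightarrow> (nat \<Rightarrow> 'a pmf)
   \<Rightarrow> ('a hist \<Rightarrow> nat pmf) \<Rightarrow> 'a hist \<Rightarrow> 'a hist pmf" where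
  "prs_step m phi S D sel h =
     (if Phi m phi (cur_asg h) then return_pmf h
      else do { k \<leftarrow> sel h; x' \<leftarrow> resample D (S k) (cur_asg h);
                return_pmf (fst h, (k, x') # snd h) })"

fun prs_run ::
  "nat \<Rightarrow> nat \<Rightarrow> (nat \<Rightarrow> 'a asg \<Rightarrow> bool) \<Rightarrow> (nat \<Rightarrow> nat set) \<Rightarrow> (nat \<Rightarrow> 'a pmf)
   \<Rightarrow> ('a hist \<Rightarrow> nat pmf) \<Rightarrow> nat \<Rightarrow> 'a hist pmf" where
  "prs_run n m phi S D sel 0 = map_pmf (\<lambda>x. (x, [])) (prod_dist n D)"
| "prs_run n m phi S D sel (Suc t) = bind_pmf (prs_run n m phi S D sel t) (prs_step m phi S D sel)"

text \<open>Expected number of iterations in which the scope of clause k is resampled: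
  the number of such iterations is the (monotone) limit of the number among the
  first t iterations, so by monotone convergence its expectation is the supremum
  over t of the expectations.\<close>
definition expected_resamplings ::
  "nat \<Rightarrow> nat \<Rightarrow> (nat \<Rightarrow> 'a asg \<Rightarrow> bool) \<Rightarrow> (nat \<Rightarrow> nat set) \<Rightarrow> (nat \<Rightarrow> 'a pmf)
   \<Rightarrow> ('a hist \<Rightarrow> nat pmf) \<Rightarrow> nat \<Rightarrow> ennreal" where
  "expected_resamplings n m phi S D sel k =
     (SUP t. \<integral>\<^sup>+ h. of_nat (count_list (map fst (snd h)) k) \<partial>measure_pmf (prs_run n m phi S D sel t))"

definition dep_adj :: "(nat \<Rightarrow> nat set) \<Rightarrow> nat \<Rightarrow> nat \<Rightarrow> bool" where
  "dep_adj S k l = (k \<noteq> l \<and> S k \<inter> S l \<noteq> {})"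

definition indep_sets :: "nat \<Rightarrow> (nat \<Rightarrow> nat set) \<Rightarrow> nat set set" where
  "indep_sets m S = {I. I \<subseteq> {..<m} \<and> (\<forall>k\<in>I. \<forall>l\<in>I. \<not> dep_adj S k l)}"

definition p_clause :: "nat \<Rightarrow> (nat \<Rightarrow> 'a asg \<Rightarrow> bool) \<Rightarrow> (nat \<Rightarrow> 'a pmf) \<Rightarrow> nat \<Rightarrow> real" where
  "p_clause n phi D k = measure_pmf.prob (prod_dist n D) {x. \<not> phi k x}"

definition q_coeff ::
  "nat \<Rightarrow> nat \<Rightarrow> (nat \<Rightarrow> 'a asg \<Rightarrow> bool) \<Rightarrow> (nat \<Rightarrow> nat set) \<Rightarrow> (nat \<Rightarrow> 'a pmf) \<Rightarrow> nat set \<Rightarrow> real" where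
  "q_coeff n m phi S D T =
     (\<Sum>I\<in>{I \<in> indep_sets m S. T \<subseteq> I}. (-1) ^ card (I - T) * (\<Prod>k\<in>I. p_clause n phi D k))"

definition extremal ::
  "nat \<Rightarrow> nat \<Rightarrow> (nat \<Rightarrow> 'a asg \<Rightarrow> bool) \<Rightarrow> (nat \<Rightarrow> nat set) \<Rightarrow> (nat \<Rightarrow> 'a set) \<Rightarrow> bool" where
  "extremal n m phi S Dom =
     (\<forall>k<m. \<forall>l<m. dep_adj S k l \<longrightarrow>
        (\<forall>x. (\<forall>i<n. x i \<in> Dom i) \<longrightarrow> phi k x \<or> phi l x))"

end

theory Submission
  imports Defs
begin

(* Let V be the least fixed point of the Bellman equation of an adversary that always picks the
   violated clause minimising the expected number of future resamplings of clause k.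
   Extremality makes the scopes of simultaneously violated clauses disjoint, so their resampling
   operators commute; together with almost-sure termination, which a positive-probability
   solution forces at a geometric rate, this shows V = [j = k] + E_j V for EVERY violated
   clause j.  So every selection rule is optimal, and the expected count equals the mean of V
   under the product distribution.
   For an independent set I the events "all clauses of I are violated" factorise, which gives
   E[1_I] = p_I and E[V 1_I] = p_I (E V + [k \<in> I]).  Since the violated clauses of a
   supported assignment form an independent set, the alternating sum of these identities over
   independent sets collapses by the parity of subsets, yielding q_\<emptyset> = Pr(\<Phi>) and
   q_\<emptyset> E V = q_{k}. *)

lemma Min_SUP_le_SUP_Min:
  fixes h :: "'i \<Rightarrow> nat \<Rightarrow> 'b::complete_linorder"
  assumes "finite J" "J \<noteq> {}" "\<And>j. j \<in> J \<Longrightarrow> incseq (h j)"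
  shows "Min ((\<lambda>j. SUP s. h j s) ` J) \<le> (SUP s. Min ((\<lambda>j. h j s) ` J))"
proof (rule ccontr)
  let ?L = "SUP s. Min ((\<lambda>j. h j s) ` J)"
  assume "\<not> ?thesis"
  hence "?L < Min ((\<lambda>j. SUP s. h j s) ` J)" by simp
  hence "\<forall>j\<in>J. ?L < (SUP s. h j s)"
    using assms(1,2) by (simp add: Min_gr_iff)
  hence "\<forall>j\<in>J. \<exists>s. ?L < h j s" by (simp add: less_SUP_iff)
  then obtain sf where sf: "\<forall>j\<in>J. ?L < h j (sf j)" by metis
  define s0 where "s0 = Max (sf ` J)"
  have "\<forall>j\<in>J. ?L < h j s0"
  proof
    fix j assume j: "j \<in> J"
    have "h j (sf j) \<le> h j s0"
      using assms(1,3) j unfolding s0_def by (simp add: incseq_def)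
    thus "?L < h j s0" using sf j by (meson less_le_trans)
  qed
  hence "?L < Min ((\<lambda>j. h j s0) ` J)" using assms(1,2) by (simp add: Min_gr_iff)
  moreover have "Min ((\<lambda>j. h j s0) ` J) \<le> ?L" by (rule SUP_upper) simp
  ultimately show False by simp
qed

lemma sum_signed_card:
  fixes h :: "'b set \<Rightarrow> real"
  assumes "finite A"
  shows "(\<Sum>I\<in>A. (-1) ^ card I * h I)
           = (\<Sum>I\<in>{I\<in>A. even (card I)}. h I) - (\<Sum>I\<in>{I\<in>A. odd (card I)}. h I)"
proof -
  have "(\<Sum>I\<in>A. (-1) ^ card I * h I) = (\<Sum>I\<in>A. if even (card I) then h I else - h I)"
    by (intro sum.cong) auto
  also have "\<dots> = (\<Sum>I\<in>{I\<in>A. even (card I)}. h I) + (\<Sum>I\<in>{I\<in>A. odd (card I)}. - h I)"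
    using assms by (simp add: sum.If_cases Int_def conj_commute)
  finally show ?thesis by (simp add: sum_negf)
qed

section \<open>Resampling\<close>

lemma set_pmf_resample:
  assumes "finite T" "y \<in> set_pmf (resample D T x)"
  shows "(\<forall>i. i \<notin> T \<longrightarrow> y i = x i) \<and> (\<forall>i\<in>T. y i \<in> set_pmf (D i))"
  using assms unfolding resample_def by (auto simp: set_Pi_pmf PiE_dflt_def)

lemma resample_union:
  assumes "finite T1" "finite T2" "T1 \<inter> T2 = {}"
  shows "bind_pmf (resample D T1 x) (resample D T2) = resample D (T1 \<union> T2) x"
proof -
  have "resample D (T1 \<union> T2) x = map_pmf (\<lambda>y i. if i \<in> T1 \<union> T2 then y i else x i)
      (map_pmf (\<lambda>(f,g) i. if i \<in> T1 then f i else g i)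
             (pair_pmf (Pi_pmf T1 undefined D) (Pi_pmf T2 undefined D)))"
    unfolding resample_def by (subst Pi_pmf_union[OF assms]) (rule refl)
  also have "\<dots> = map_pmf (\<lambda>(f,g) i. if i \<in> T2 then g i else if i \<in> T1 then f i else x i)
             (pair_pmf (Pi_pmf T1 undefined D) (Pi_pmf T2 undefined D))"
    unfolding map_pmf_comp
    by (intro map_pmf_cong refl) (use assms(3) in \<open>auto simp: fun_eq_iff\<close>)
  also have "\<dots> = bind_pmf (resample D T1 x) (resample D T2)"
    unfolding resample_def pair_pmf_def map_bind_pmf bind_map_pmf map_pmf_def[symmetric]
    by (simp add: map_pmf_def bind_assoc_pmf bind_return_pmf)
  finally show ?thesis ..
qed

lemma set_pmf_prod_dist: "x \<in> set_pmf (prod_dist n D) \<Longrightarrow> i < n \<Longrightarrow> x i \<in> set_pmf (D i)"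
  unfolding prod_dist_def by (auto simp: set_Pi_pmf PiE_dflt_def)

text \<open>Under the product distribution, the coordinates in T and the result of resampling them
  are independent and the latter is again distributed as the product.\<close>

lemma nn_integral_prod_dist_resample:
  fixes f W :: "'a asg \<Rightarrow> ennreal"
  assumes T: "T \<subseteq> {..<n}"
    and f: "\<And>x y. (\<forall>i\<in>T. x i = y i) \<Longrightarrow> f x = f y"
  shows "(\<integral>\<^sup>+x. f x * (\<integral>\<^sup>+y. W y \<partial>resample D T x) \<partial>prod_dist n D)
           = (\<integral>\<^sup>+x. f x \<partial>prod_dist n D) * (\<integral>\<^sup>+x. W x \<partial>prod_dist n D)"
proof -
  let ?P = "Pi_pmf T undefined D" and ?Q = "Pi_pmf ({..<n} - T) undefined D"
  define mg where "mg = (\<lambda>(a::'a asg) (b::'a asg) i. if i \<in> T then a i else b i)"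
  have "{..<n} = T \<union> ({..<n} - T)" using T by auto
  hence "prod_dist n D = Pi_pmf (T \<union> ({..<n} - T)) undefined D" unfolding prod_dist_def by simp
  also have "\<dots> = map_pmf (\<lambda>(a,b). mg a b) (pair_pmf ?P ?Q)"
    using T unfolding mg_def by (subst Pi_pmf_union) (auto intro: finite_subset)
  finally have split: "prod_dist n D = map_pmf (\<lambda>(a,b). mg a b) (pair_pmf ?P ?Q)" .
  define f' where "f' a = f (mg a undefined)" for a
  have ff: "f (mg a b) = f' a" for a b unfolding f'_def by (intro f) (simp add: mg_def)
  define h where "h b = (\<integral>\<^sup>+c. W (mg c b) \<partial>?P)" for b
  have rr: "(\<integral>\<^sup>+y. W y \<partial>resample D T (mg a b)) = h b" for a b
  proof -
    have "(\<lambda>c i. if i \<in> T then c i else mg a b i) = (\<lambda>c. mg c b)"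
      by (auto simp: mg_def fun_eq_iff)
    thus ?thesis unfolding resample_def h_def by simp
  qed
  have "(\<integral>\<^sup>+x. W x \<partial>prod_dist n D) = (\<integral>\<^sup>+p. W (mg (snd p) (fst p)) \<partial>pair_pmf ?Q ?P)"
    unfolding split by (subst pair_commute_pmf) (simp add: case_prod_unfold)
  also have "\<dots> = (\<integral>\<^sup>+b. h b \<partial>?Q)"
    unfolding h_def by (simp add: nn_integral_pair_pmf')
  finally have W: "(\<integral>\<^sup>+x. W x \<partial>prod_dist n D) = (\<integral>\<^sup>+b. h b \<partial>?Q)" .
  have "(\<integral>\<^sup>+x. f x * (\<integral>\<^sup>+y. W y \<partial>resample D T x) \<partial>prod_dist n D)
          = (\<integral>\<^sup>+a. \<integral>\<^sup>+b. f' a * h b \<partial>?Q \<partial>?P)"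
    unfolding split by (simp add: nn_integral_pair_pmf' ff rr)
  also have "\<dots> = (\<integral>\<^sup>+a. f' a \<partial>?P) * (\<integral>\<^sup>+b. h b \<partial>?Q)"
    by (simp add: nn_integral_cmult nn_integral_multc)
  also have "(\<integral>\<^sup>+a. f' a \<partial>?P) = (\<integral>\<^sup>+x. f x \<partial>prod_dist n D)"
    unfolding split by (simp add: nn_integral_pair_pmf' ff measure_pmf.emeasure_space_1)
  finally show ?thesis using W by simp
qed

locale extremal_system =
  fixes n m :: nat
    and Dom :: "nat \<Rightarrow> 'a set"
    and D :: "nat \<Rightarrow> 'a pmf"
    and phi :: "nat \<Rightarrow> 'a asg \<Rightarrow> bool"
    and S :: "nat \<Rightarrow> nat set"
  assumes dist_on_dom: "\<And>i. i < n \<Longrightarrow> set_pmf (D i) \<subseteq> Dom i"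
    and scope_sub: "\<And>j. j < m \<Longrightarrow> S j \<subseteq> {..<n}"
    and scope_dep: "\<And>j x y. j < m \<Longrightarrow> (\<forall>i\<in>S j. x i = y i) \<Longrightarrow> phi j x = phi j y"
    and extr: "extremal n m phi S Dom"
begin

definition supported :: "'a asg \<Rightarrow> bool" where
  "supported x \<longleftrightarrow> (\<forall>i<n. x i \<in> set_pmf (D i))"

definition violated :: "'a asg \<Rightarrow> nat set" where
  "violated x = {j. j < m \<and> \<not> phi j x}"

definition res_exp :: "nat \<Rightarrow> ('a asg \<Rightarrow> ennreal) \<Rightarrow> 'a asg \<Rightarrow> ennreal" where
  "res_exp j f x = (\<integral>\<^sup>+y. f y \<partial>measure_pmf (resample D (S j) x))"

lemma finite_scope: "j < m \<Longrightarrow> finite (S j)"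
  using scope_sub finite_subset by blast

lemma finite_violated: "finite (violated x)"
  unfolding violated_def by auto

lemma violated_lt: "j \<in> violated x \<Longrightarrow> j < m"
  unfolding violated_def by auto

lemma Phi_iff_violated_empty: "Phi m phi x \<longleftrightarrow> violated x = {}"
  unfolding Phi_def violated_def by auto

lemma supported_prod_dist: "x \<in> set_pmf (prod_dist n D) \<Longrightarrow> supported x"
  unfolding supported_def using set_pmf_prod_dist by blast

lemma supported_resample:
  assumes "supported x" "j < m" "y \<in> set_pmf (resample D (S j) x)"
  shows "supported y"
  using set_pmf_resample[OF finite_scope[OF assms(2)] assms(3)] assms(1)
  unfolding supported_def by metis

lemma violated_scopes_disjoint:
  assumes "supported x" "j \<in> violated x" "l \<in> violated x" "j \<noteq> l"
  shows "S j \<inter> S l = {}"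
proof (rule ccontr)
  assume "S j \<inter> S l \<noteq> {}"
  hence "dep_adj S j l" using assms(4) by (simp add: dep_adj_def)
  moreover have "\<forall>i<n. x i \<in> Dom i" using assms(1) dist_on_dom unfolding supported_def by blast
  ultimately have "phi j x \<or> phi l x"
    using extr violated_lt assms(2,3) unfolding extremal_def by blast
  thus False using assms(2,3) unfolding violated_def by auto
qed

lemma violated_indep: "supported x \<Longrightarrow> I \<subseteq> violated x \<Longrightarrow> I \<in> indep_sets m S"
  unfolding indep_sets_def dep_adj_def using violated_lt violated_scopes_disjoint by blast

lemma violated_resample_disjoint:
  assumes "j < m" "l < m" "S j \<inter> S l = {}" "y \<in> set_pmf (resample D (S j) x)"
  shows "l \<in> violated y \<longleftrightarrow> l \<in> violated x"
proof -
  have "phi l y = phi l x"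
    using set_pmf_resample[OF finite_scope[OF assms(1)] assms(4)] assms(3) scope_dep[OF assms(2)]
    by blast
  thus ?thesis unfolding violated_def by auto
qed

lemma res_exp_commute:
  assumes "j < m" "l < m" "S j \<inter> S l = {}"
  shows "res_exp j (res_exp l f) x = res_exp l (res_exp j f) x"
proof -
  have "bind_pmf (resample D (S j) x) (resample D (S l))
          = bind_pmf (resample D (S l) x) (resample D (S j))"
    using resample_union finite_scope assms by (metis Int_commute Un_commute)
  thus ?thesis unfolding res_exp_def by (metis nn_integral_bind_pmf)
qed

lemma res_exp_mono: "(\<And>y. f y \<le> f' y) \<Longrightarrow> res_exp j f x \<le> res_exp j f' x"
  unfolding res_exp_def by (intro nn_integral_mono) auto

lemma res_exp_mono_on:
  "(\<And>y. y \<in> set_pmf (resample D (S j) x) \<Longrightarrow> f y \<le> f' y) \<Longrightarrow> res_exp j f x \<le> res_exp j f' x"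
  unfolding res_exp_def by (intro nn_integral_mono_AE AE_pmfI) auto

lemma res_exp_cong_on:
  "(\<And>y. y \<in> set_pmf (resample D (S j) x) \<Longrightarrow> f y = f' y) \<Longrightarrow> res_exp j f x = res_exp j f' x"
  unfolding res_exp_def by (intro nn_integral_cong_AE AE_pmfI) auto

lemma res_exp_mono_supported:
  assumes "supported x" "j < m" "\<And>y. supported y \<Longrightarrow> f y \<le> f' y"
  shows "res_exp j f x \<le> res_exp j f' x"
  using assms supported_resample by (intro res_exp_mono_on) blast

lemma res_exp_const: "res_exp j (\<lambda>y. c) x = c"
  unfolding res_exp_def by (simp add: measure_pmf.emeasure_space_1)

lemma res_exp_add: "res_exp j (\<lambda>y. f y + h y) x = res_exp j f x + res_exp j h x"
  unfolding res_exp_def by (rule nn_integral_add) auto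

lemma res_exp_add_const: "res_exp j (\<lambda>y. c + f y) x = c + res_exp j f x"
  by (simp add: res_exp_add res_exp_const)

lemma res_exp_cmult: "res_exp j (\<lambda>y. c * f y) x = c * res_exp j f x"
  unfolding res_exp_def by (subst nn_integral_cmult) auto

lemma res_exp_sum: "res_exp j (\<lambda>y. \<Sum>r\<in>A. f r y) x = (\<Sum>r\<in>A. res_exp j (f r) x)"
  unfolding res_exp_def by (rule nn_integral_sum) auto

lemma res_exp_SUP:
  assumes "\<And>y. incseq (\<lambda>s. f s y)"
  shows "res_exp j (\<lambda>y. SUP s. f s y) x = (SUP s. res_exp j (f s) x)"
  unfolding res_exp_def
  by (rule nn_integral_monotone_convergence_SUP) (use assms in \<open>auto simp: incseq_def le_fun_def\<close>)

lemma nn_integral_res_exp_indep: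
  assumes "j < m" "\<And>x y. (\<forall>i\<in>S j. x i = y i) \<Longrightarrow> f x = f y"
  shows "(\<integral>\<^sup>+x. f x * res_exp j W x \<partial>prod_dist n D)
           = (\<integral>\<^sup>+x. f x \<partial>prod_dist n D) * (\<integral>\<^sup>+x. W x \<partial>prod_dist n D)"
  unfolding res_exp_def using nn_integral_prod_dist_resample scope_sub assms by blast

section \<open>Independent sets and the coefficients q\<close>

definition ind_viol :: "nat set \<Rightarrow> 'a asg \<Rightarrow> ennreal" where
  "ind_viol I x = (if I \<subseteq> violated x then 1 else 0)"

definition p_set :: "nat set \<Rightarrow> real" where
  "p_set I = (\<Prod>j\<in>I. p_clause n phi D j)"

definition even_indep :: "nat set set" where
  "even_indep = {I \<in> indep_sets m S. even (card I)}"

definition odd_indep :: "nat set set" where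
  "odd_indep = {I \<in> indep_sets m S. odd (card I)}"

lemma p_clause_nonneg: "p_clause n phi D j \<ge> 0"
  unfolding p_clause_def by simp

lemma p_set_nonneg: "p_set I \<ge> 0"
  unfolding p_set_def by (intro prod_nonneg p_clause_nonneg)

lemma finite_indep_sets: "finite (indep_sets m S)"
  by (rule finite_subset[of _ "Pow {..<m}"]) (auto simp: indep_sets_def)

lemma finite_even_indep: "finite even_indep" and finite_odd_indep: "finite odd_indep"
  unfolding even_indep_def odd_indep_def using finite_indep_sets by auto

lemma indep_set_lt: "I \<in> indep_sets m S \<Longrightarrow> j \<in> I \<Longrightarrow> j < m"
  unfolding indep_sets_def by auto

lemma finite_indep_set: "I \<in> indep_sets m S \<Longrightarrow> finite I"
  by (meson finite_subset indep_set_lt finite_lessThan lessThan_iff subsetI)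

lemma indep_set_disjoint:
  "I \<in> indep_sets m S \<Longrightarrow> j \<in> I \<Longrightarrow> l \<in> I \<Longrightarrow> j \<noteq> l \<Longrightarrow> S j \<inter> S l = {}"
  unfolding indep_sets_def dep_adj_def by blast

lemma ind_viol_remove: "j \<in> I \<Longrightarrow> ind_viol I x = ind_viol {j} x * ind_viol (I - {j}) x"
  unfolding ind_viol_def by auto

lemma ind_viol_resample:
  assumes "I \<in> indep_sets m S" "j \<in> I" "y \<in> set_pmf (resample D (S j) x)"
  shows "ind_viol (I - {j}) y = ind_viol (I - {j}) x"
proof -
  have "l \<in> violated y \<longleftrightarrow> l \<in> violated x" if "l \<in> I - {j}" for l
    using that assms indep_set_lt indep_set_disjoint violated_resample_disjoint by (metis DiffE singletonI)
  thus ?thesis unfolding ind_viol_def by (metis subset_iff)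
qed

lemma integral_ind_viol_single: "j < m \<Longrightarrow> (\<integral>\<^sup>+x. ind_viol {j} x \<partial>prod_dist n D) = ennreal (p_clause n phi D j)"
proof -
  assume "j < m"
  hence "ind_viol {j} = indicator {x. \<not> phi j x}"
    by (auto simp: ind_viol_def violated_def fun_eq_iff split: split_indicator)
  thus ?thesis unfolding p_clause_def by (simp add: measure_pmf.emeasure_eq_measure)
qed

lemma integral_ind_viol_res_exp:
  assumes "j < m"
  shows "(\<integral>\<^sup>+x. ind_viol {j} x * res_exp j W x \<partial>prod_dist n D)
           = ennreal (p_clause n phi D j) * (\<integral>\<^sup>+x. W x \<partial>prod_dist n D)"
proof -
  have "ind_viol {j} x = ind_viol {j} y" if "\<forall>i\<in>S j. x i = y i" for x y
    using scope_dep[OF assms that] by (simp add: ind_viol_def violated_def)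
  thus ?thesis
    using nn_integral_res_exp_indep[OF assms] integral_ind_viol_single[OF assms] by simp
qed

lemma ind_viol_insert:
  assumes "insert j I \<in> indep_sets m S" "j \<notin> I"
  shows "ind_viol (insert j I) x = ind_viol {j} x * res_exp j (ind_viol I) x"
proof -
  have "res_exp j (ind_viol I) x = res_exp j (\<lambda>_. ind_viol I x) x"
    using ind_viol_resample[OF assms(1), of j] assms(2) by (intro res_exp_cong_on) simp
  thus ?thesis using ind_viol_remove[of j "insert j I"] assms(2) by (simp add: res_exp_const)
qed

lemma integral_ind_viol:
  "I \<in> indep_sets m S \<Longrightarrow> (\<integral>\<^sup>+x. ind_viol I x \<partial>prod_dist n D) = ennreal (p_set I)"
proof (induction I rule: infinite_finite_induct)
  case (infinite I) thus ?case using finite_indep_set by blast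
next
  case empty thus ?case by (simp add: ind_viol_def p_set_def measure_pmf.emeasure_space_1)
next
  case (insert j I)
  have "I \<in> indep_sets m S" using insert.prems unfolding indep_sets_def by blast
  moreover have "j < m" using indep_set_lt insert.prems by blast
  ultimately show ?case
    using insert
    by (simp add: ind_viol_insert integral_ind_viol_res_exp p_set_def p_clause_nonneg
                  ennreal_mult[symmetric] prod_nonneg)
qed

lemma q_coeff_empty: "q_coeff n m phi S D {} = (\<Sum>I\<in>even_indep. p_set I) - (\<Sum>I\<in>odd_indep. p_set I)"
  using sum_signed_card[OF finite_indep_sets, of p_set]
  unfolding q_coeff_def even_indep_def odd_indep_def p_set_def by simp

text \<open>The violated clauses of a supported assignment form an independent set, and a nonempty
  finite set has as many subsets of even as of odd cardinality.\<close>

lemma sum_ind_viol_even: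
  assumes "supported x"
  shows "(\<Sum>I\<in>even_indep. ind_viol I x) = (if violated x = {} then 1 else 0) + (\<Sum>I\<in>odd_indep. ind_viol I x)"
proof -
  have count: "(\<Sum>I\<in>A. ind_viol I x) = of_nat (card (A \<inter> {I. I \<subseteq> violated x}))" if "finite A" for A
    using that unfolding ind_viol_def by (simp add: sum.If_cases)
  have even: "even_indep \<inter> {I. I \<subseteq> violated x} = {T. T \<subseteq> violated x \<and> {} \<subseteq> T \<and> even (card T)}"
    unfolding even_indep_def using violated_indep[OF assms] by auto
  have odd: "odd_indep \<inter> {I. I \<subseteq> violated x} = {T. T \<subseteq> violated x \<and> {} \<subseteq> T \<and> odd (card T)}"
    unfolding odd_indep_def using violated_indep[OF assms] by auto
  show ?thesis
  proof (cases "violated x = {}")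
    case True
    hence "even_indep \<inter> {I. I \<subseteq> violated x} = {{}}" "odd_indep \<inter> {I. I \<subseteq> violated x} = {}"
      unfolding even odd by auto
    thus ?thesis using True by (simp add: count finite_even_indep finite_odd_indep)
  next
    case False
    have "card {T. T \<subseteq> violated x \<and> {} \<subseteq> T \<and> even (card T)}
            = card {T. T \<subseteq> violated x \<and> {} \<subseteq> T \<and> odd (card T)}"
      by (rule card_subsupersets_even_odd) (use finite_violated False in auto)
    thus ?thesis using False by (simp add: count finite_even_indep finite_odd_indep even odd)
  qed
qed

theorem q_coeff_empty_eq_prob: "q_coeff n m phi S D {} = measure_pmf.prob (prod_dist n D) {x. Phi m phi x}"
proof -
  let ?P = "prod_dist n D"
  have "(\<Sum>I\<in>even_indep. \<integral>\<^sup>+x. ind_viol I x \<partial>?P) = (\<integral>\<^sup>+x. (\<Sum>I\<in>even_indep. ind_viol I x) \<partial>?P)"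
    by (rule nn_integral_sum[symmetric]) auto
  also have "\<dots> = (\<integral>\<^sup>+x. indicator {x. Phi m phi x} x + (\<Sum>I\<in>odd_indep. ind_viol I x) \<partial>?P)"
    using sum_ind_viol_even supported_prod_dist
    by (intro nn_integral_cong_AE AE_pmfI) (auto simp: Phi_iff_violated_empty)
  also have "\<dots> = ennreal (measure_pmf.prob ?P {x. Phi m phi x}) + (\<Sum>I\<in>odd_indep. \<integral>\<^sup>+x. ind_viol I x \<partial>?P)"
    by (simp add: nn_integral_add nn_integral_sum measure_pmf.emeasure_eq_measure)
  finally have "ennreal (\<Sum>I\<in>even_indep. p_set I)
      = ennreal (measure_pmf.prob ?P {x. Phi m phi x}) + ennreal (\<Sum>I\<in>odd_indep. p_set I)"
    using integral_ind_viol by (simp add: even_indep_def odd_indep_def sum_ennreal p_set_nonneg)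
  hence "(\<Sum>I\<in>even_indep. p_set I) = measure_pmf.prob ?P {x. Phi m phi x} + (\<Sum>I\<in>odd_indep. p_set I)"
    by (simp add: ennreal_plus[symmetric] sum_nonneg p_set_nonneg del: ennreal_plus)
  thus ?thesis unfolding q_coeff_empty by simp
qed

section \<open>Termination\<close>

text \<open>survival s x bounds, uniformly over selection rules, the probability that PRS started
  from x has not yet terminated after s iterations.\<close>

definition max_step :: "('a asg \<Rightarrow> ennreal) \<Rightarrow> 'a asg \<Rightarrow> ennreal" where
  "max_step f x = (if violated x = {} then 0 else Max ((\<lambda>j. res_exp j f x) ` violated x))"

definition survival :: "nat \<Rightarrow> 'a asg \<Rightarrow> ennreal" where
  "survival s = (max_step ^^ s) (\<lambda>x. if violated x = {} then 0 else 1)"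

lemma survival_0: "survival 0 x = (if violated x = {} then 0 else 1)"
  unfolding survival_def by simp

lemma survival_Suc: "survival (Suc s) = max_step (survival s)"
  unfolding survival_def by simp

lemma res_exp_le_max_step: "j \<in> violated x \<Longrightarrow> res_exp j f x \<le> max_step f x"
  unfolding max_step_def using finite_violated by (auto intro: Max_ge)

lemma max_step_attained: "violated x \<noteq> {} \<Longrightarrow> \<exists>j\<in>violated x. max_step f x = res_exp j f x"
proof -
  assume "violated x \<noteq> {}"
  moreover have "Max ((\<lambda>j. res_exp j f x) ` violated x) \<in> (\<lambda>j. res_exp j f x) ` violated x"
    by (rule Max_in) (use calculation finite_violated in auto)
  ultimately show ?thesis unfolding max_step_def by auto
qed

lemma max_step_le:
  assumes "\<And>j. j \<in> violated x \<Longrightarrow> res_exp j f x \<le> c"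
  shows "max_step f x \<le> c"
  using assms max_step_attained[of x f] by (cases "violated x = {}") (auto simp: max_step_def)

lemma max_step_mono_supported:
  assumes "supported x" "\<And>y. supported y \<Longrightarrow> f y \<le> f' y"
  shows "max_step f x \<le> max_step f' x"
  using assms violated_lt
  by (intro max_step_le order.trans[OF res_exp_mono_supported res_exp_le_max_step]) auto

lemma max_step_cmult: "max_step (\<lambda>y. c * f y) x \<le> c * max_step f x"
proof (rule max_step_le)
  fix j assume "j \<in> violated x"
  thus "res_exp j (\<lambda>y. c * f y) x \<le> c * max_step f x"
    unfolding res_exp_cmult by (intro mult_left_mono res_exp_le_max_step) auto
qed

lemma survival_satisfied: "violated x = {} \<Longrightarrow> survival s x = 0"
  by (cases s) (simp_all add: survival_0 survival_Suc max_step_def)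

lemma survival_le_1: "survival s x \<le> 1"
proof (induction s arbitrary: x)
  case 0 thus ?case by (simp add: survival_0)
next
  case (Suc s)
  have "res_exp j (survival s) x \<le> res_exp j (\<lambda>_. 1) x" for j
    by (intro res_exp_mono Suc.IH)
  thus ?case unfolding survival_Suc res_exp_const by (intro max_step_le)
qed

end

locale satisfiable_system = extremal_system +
  assumes sat: "measure_pmf.prob (prod_dist n D) {x. Phi m phi x} > 0"
begin

lemma exists_supported_solution: "\<exists>z. Phi m phi z \<and> supported z"
proof -
  have "measure (measure_pmf (prod_dist n D)) {x. Phi m phi x} \<noteq> 0" using sat by simp
  hence "set_pmf (prod_dist n D) \<inter> {x. Phi m phi x} \<noteq> {}"
    by (simp add: measure_pmf_zero_iff)
  thus ?thesis using supported_prod_dist by blast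
qed

definition sol :: "'a asg" where "sol = (SOME z. Phi m phi z \<and> supported z)"

lemma sol: "Phi m phi sol" "supported sol"
  using someI_ex[OF exists_supported_solution] unfolding sol_def by auto

definition sol_prob :: real where "sol_prob = (\<Prod>i<n. pmf (D i) (sol i))"

lemma sol_prob_pos: "sol_prob > 0"
  using sol(2) unfolding sol_prob_def supported_def by (intro prod_pos) (simp add: pmf_positive)

lemma sol_prob_le_1: "sol_prob \<le> 1"
  unfolding sol_prob_def by (intro prod_le_1) (auto simp: pmf_le_1)

definition dist_sol :: "'a asg \<Rightarrow> nat" where "dist_sol x = card {i. i < n \<and> x i \<noteq> sol i}"

lemma dist_sol_le: "dist_sol x \<le> n"
  unfolding dist_sol_def using card_mono[of "{..<n}" "{i. i < n \<and> x i \<noteq> sol i}"] by auto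

lemma violated_sol_differs:
  assumes "j \<in> violated x"
  shows "\<exists>i\<in>S j. x i \<noteq> sol i"
proof (rule ccontr)
  assume "\<not> ?thesis"
  hence "phi j x = phi j sol" using scope_dep violated_lt[OF assms] by blast
  thus False using assms sol(1) unfolding Phi_def violated_def by auto
qed

lemma dist_sol_resample_to_sol:
  assumes "j < m" "i0 \<in> S j" "x i0 \<noteq> sol i0" "y \<in> set_pmf (resample D (S j) x)"
    and "\<forall>i\<in>S j. y i = sol i"
  shows "dist_sol y < dist_sol x"
proof -
  have "\<forall>i. i \<notin> S j \<longrightarrow> y i = x i" using set_pmf_resample[OF finite_scope] assms(1,4) by blast
  moreover have "i0 < n" using assms(1,2) scope_sub by blast
  ultimately have "{i. i < n \<and> y i \<noteq> sol i} \<subset> {i. i < n \<and> x i \<noteq> sol i}"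
    using assms(2,3,5) by auto
  thus ?thesis unfolding dist_sol_def by (intro psubset_card_mono) auto
qed

lemma sol_prob_le_resample_hit:
  assumes "j < m"
  shows "ennreal sol_prob \<le> emeasure (measure_pmf (resample D (S j) x)) {y. \<forall>i\<in>S j. y i = sol i}"
proof -
  define c0 where "c0 = (\<lambda>i. if i \<in> S j then sol i else undefined)"
  have "sol_prob = (\<Prod>i\<in>{..<n} - S j. pmf (D i) (sol i)) * (\<Prod>i\<in>S j. pmf (D i) (sol i))"
    unfolding sol_prob_def using prod.subset_diff[OF scope_sub[OF assms]] by simp
  also have "\<dots> \<le> (\<Prod>i\<in>S j. pmf (D i) (sol i))"
    by (intro mult_left_le_one_le prod_le_1 prod_nonneg) (auto simp: pmf_le_1)
  also have "\<dots> = pmf (Pi_pmf (S j) undefined D) c0"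
    using finite_scope[OF assms] by (subst pmf_Pi) (auto simp: c0_def)
  finally have "ennreal sol_prob \<le> emeasure (measure_pmf (Pi_pmf (S j) undefined D)) {c0}"
    by (simp add: emeasure_pmf_single)
  also have "\<dots> \<le> emeasure (measure_pmf (Pi_pmf (S j) undefined D))
       ((\<lambda>y i. if i \<in> S j then y i else x i) -` {y. \<forall>i\<in>S j. y i = sol i})"
    by (intro emeasure_mono) (auto simp: c0_def)
  finally show ?thesis unfolding resample_def by simp
qed

lemma res_exp_plus_reach_le_1:
  assumes "j < m" "\<And>y. y \<in> set_pmf (resample D (S j) x) \<Longrightarrow> f y \<le> 1"
    and "\<And>y. y \<in> set_pmf (resample D (S j) x) \<Longrightarrow> \<forall>i\<in>S j. y i = sol i \<Longrightarrow> f y + c \<le> 1"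
  shows "res_exp j f x + c * ennreal sol_prob \<le> 1"
proof -
  let ?E = "{y. \<forall>i\<in>S j. y i = sol i}"
  have "res_exp j f x + c * ennreal sol_prob
          \<le> res_exp j f x + c * emeasure (measure_pmf (resample D (S j) x)) ?E"
    by (intro add_left_mono mult_left_mono sol_prob_le_resample_hit[OF assms(1)]) auto
  also have "\<dots> = res_exp j (\<lambda>y. f y + c * indicator ?E y) x"
    unfolding res_exp_add by (simp add: res_exp_def nn_integral_cmult_indicator)
  also have "\<dots> \<le> res_exp j (\<lambda>_. 1) x"
    using assms(2,3) by (intro res_exp_mono_on) (auto split: split_indicator)
  finally show ?thesis by (simp add: res_exp_const)
qed

text \<open>A violated clause differs from the solution somewhere in its scope, and with probability
  at least sol_prob its resampling copies the solution there; so within d steps the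
  solution is reached with probability at least sol_prob ^ d, d being the distance to it.\<close>

lemma survival_plus_reach_le_1:
  "supported x \<Longrightarrow> dist_sol x \<le> d \<Longrightarrow> d \<le> s \<Longrightarrow> survival s x + ennreal (sol_prob ^ d) \<le> 1"
proof (induction s arbitrary: x d)
  case 0
  hence "\<forall>i<n. x i = sol i" unfolding dist_sol_def by auto
  hence "violated x = violated sol"
    unfolding violated_def using scope_dep scope_sub by (metis lessThan_iff subset_iff)
  thus ?case using 0 sol(1) by (simp add: Phi_iff_violated_empty survival_satisfied)
next
  case (Suc s)
  show ?case
  proof (cases "violated x = {}")
    case True
    have "sol_prob ^ d \<le> 1" using sol_prob_pos sol_prob_le_1 by (intro power_le_one) auto
    thus ?thesis using True by (simp add: survival_satisfied)
  next
    case False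
    then obtain j where j: "j \<in> violated x" "survival (Suc s) x = res_exp j (survival s) x"
      unfolding survival_Suc using max_step_attained by blast
    have jm: "j < m" using violated_lt[OF j(1)] .
    obtain i0 where i0: "i0 \<in> S j" "x i0 \<noteq> sol i0" using violated_sol_differs[OF j(1)] by blast
    have "dist_sol x \<noteq> 0"
      using i0 scope_sub[OF jm] unfolding dist_sol_def by (subst card_0_eq) auto
    then obtain d' where d': "d = Suc d'" using Suc.prems(2) by (cases d) auto
    have "res_exp j (survival s) x + ennreal (sol_prob ^ d') * ennreal sol_prob \<le> 1"
    proof (rule res_exp_plus_reach_le_1[OF jm survival_le_1])
      fix y assume y: "y \<in> set_pmf (resample D (S j) x)" and "\<forall>i\<in>S j. y i = sol i"
      hence "dist_sol y \<le> d'" using dist_sol_resample_to_sol[OF jm i0 y] Suc.prems(2) d' by simp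
      thus "survival s y + ennreal (sol_prob ^ d') \<le> 1"
        using Suc.IH[OF supported_resample[OF Suc.prems(1) jm y]] Suc.prems(3) d' by simp
    qed
    thus ?thesis using j(2) d' sol_prob_pos by (simp add: ennreal_mult[symmetric] mult.commute)
  qed
qed

definition decay :: real where "decay = 1 - sol_prob ^ n"

lemma decay_nonneg: "decay \<ge> 0"
  using sol_prob_pos sol_prob_le_1 power_le_one[of sol_prob n] unfolding decay_def by simp

lemma decay_lt_1: "decay < 1"
  using sol_prob_pos unfolding decay_def by simp

lemma survival_n_le: "supported x \<Longrightarrow> survival n x \<le> ennreal decay * survival 0 x"
proof (cases "violated x = {}")
  case False
  assume x: "supported x"
  obtain r where r: "survival n x = ennreal r" "r \<ge> 0"
    using survival_le_1[of n x] by (cases "survival n x" rule: ennreal_cases) (auto simp: top_unique)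
  have "survival n x + ennreal (sol_prob ^ n) \<le> 1"
    by (rule survival_plus_reach_le_1[OF x dist_sol_le]) simp
  hence "r + sol_prob ^ n \<le> 1"
    using r sol_prob_pos by (simp add: ennreal_plus[symmetric] del: ennreal_plus)
  thus ?thesis using False r unfolding decay_def by (simp add: survival_0)
qed (simp add: survival_satisfied)

lemma survival_shift: "supported x \<Longrightarrow> survival (s + n) x \<le> ennreal decay * survival s x"
proof (induction s arbitrary: x)
  case 0 thus ?case using survival_n_le by simp
next
  case (Suc s)
  have "survival (Suc s + n) x = max_step (survival (s + n)) x" by (simp add: survival_Suc)
  also have "\<dots> \<le> max_step (\<lambda>y. ennreal decay * survival s y) x"
    by (intro max_step_mono_supported Suc.prems Suc.IH)
  also have "\<dots> \<le> ennreal decay * survival (Suc s) x"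
    unfolding survival_Suc by (rule max_step_cmult)
  finally show ?case .
qed

lemma survival_geometric: "supported x \<Longrightarrow> survival (q * n) x \<le> ennreal (decay ^ q)"
proof (induction q)
  case 0 thus ?case using survival_le_1[of 0 x] by simp
next
  case (Suc q)
  have "survival (Suc q * n) x \<le> ennreal decay * survival (q * n) x"
    using survival_shift[OF Suc.prems, of "q * n"] by (simp add: add.commute)
  also have "\<dots> \<le> ennreal decay * ennreal (decay ^ q)"
    by (intro mult_left_mono Suc.IH[OF Suc.prems]) auto
  finally show ?case using decay_nonneg by (simp add: ennreal_mult[symmetric])
qed

lemma survival_vanishes: "supported x \<Longrightarrow> e > 0 \<Longrightarrow> \<exists>s. survival s x \<le> ennreal e"
proof -
  assume x: "supported x" and e: "e > 0"
  have "(\<lambda>q. decay ^ q) \<longlonglongrightarrow> 0"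
    using decay_nonneg decay_lt_1 by (intro LIMSEQ_power_zero) auto
  then obtain q where "decay ^ q < e"
    using e order_tendstoD(2) eventually_sequentially by (metis order.refl)
  hence "survival (q * n) x \<le> ennreal e"
    using survival_geometric[OF x, of q] by (meson ennreal_leI less_imp_le order.trans)
  thus ?thesis by blast
qed

end

section \<open>The value of the optimal adversary\<close>

locale counted_clause = extremal_system +
  fixes k :: nat
  assumes k_lt: "k < m"
begin

definition cost :: "nat \<Rightarrow> ennreal" where "cost j = (if j = k then 1 else 0)"

text \<open>The Bellman operator of an adversary that picks the violated clause minimising the expected
  number of resamplings of clause k; val is its least fixed point, reached by value iteration.\<close>

definition bellman :: "('a asg \<Rightarrow> ennreal) \<Rightarrow> 'a asg \<Rightarrow> ennreal" where
  "bellman f x = (if violated x = {} then 0 else Min ((\<lambda>j. cost j + res_exp j f x) ` violated x))"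

definition val_iter :: "nat \<Rightarrow> 'a asg \<Rightarrow> ennreal" where
  "val_iter s = (bellman ^^ s) (\<lambda>_. 0)"

definition val :: "'a asg \<Rightarrow> ennreal" where
  "val x = (SUP s. val_iter s x)"

lemma bellman_le: "j \<in> violated x \<Longrightarrow> bellman f x \<le> cost j + res_exp j f x"
  unfolding bellman_def using finite_violated by (auto intro: Min_le)

lemma bellman_satisfied: "violated x = {} \<Longrightarrow> bellman f x = 0"
  unfolding bellman_def by simp

lemma bellman_attained:
  "violated x \<noteq> {} \<Longrightarrow> \<exists>j\<in>violated x. bellman f x = cost j + res_exp j f x"
proof -
  assume "violated x \<noteq> {}"
  moreover have "Min ((\<lambda>j. cost j + res_exp j f x) ` violated x)
                   \<in> (\<lambda>j. cost j + res_exp j f x) ` violated x"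
    by (rule Min_in) (use calculation finite_violated in auto)
  ultimately show ?thesis unfolding bellman_def by auto
qed

lemma bellman_mono: "(\<And>y. f y \<le> f' y) \<Longrightarrow> bellman f x \<le> bellman f' x"
proof (cases "violated x = {}")
  case False
  assume "\<And>y. f y \<le> f' y"
  then obtain j where "j \<in> violated x" "bellman f' x = cost j + res_exp j f' x"
      "bellman f x \<le> cost j + res_exp j f x"
    using bellman_attained[OF False] bellman_le by blast
  thus ?thesis using \<open>\<And>y. f y \<le> f' y\<close> by (metis add_left_mono res_exp_mono order.trans)
qed (simp add: bellman_satisfied)

lemma val_iter_0: "val_iter 0 x = 0"
  unfolding val_iter_def by simp

lemma val_iter_Suc: "val_iter (Suc s) = bellman (val_iter s)"
  unfolding val_iter_def by simp

lemma val_iter_incseq: "incseq (\<lambda>s. val_iter s x)"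
proof -
  have "val_iter s y \<le> val_iter (Suc s) y" for s y
    by (induction s arbitrary: y) (simp_all add: val_iter_0 val_iter_Suc bellman_mono)
  thus ?thesis by (intro incseq_SucI)
qed

lemma val_iter_le_val: "val_iter s x \<le> val x"
  unfolding val_def by (rule SUP_upper) simp

lemma res_exp_val: "res_exp j val x = (SUP s. res_exp j (val_iter s) x)"
  unfolding val_def by (rule res_exp_SUP) (rule val_iter_incseq)

lemma val_satisfied: "violated x = {} \<Longrightarrow> val x = 0"
proof -
  assume "violated x = {}"
  hence "val_iter s x = 0" for s by (cases s) (simp_all add: val_iter_0 val_iter_Suc bellman_satisfied)
  thus ?thesis unfolding val_def by simp
qed

lemma val_le_step: "j \<in> violated x \<Longrightarrow> val x \<le> cost j + res_exp j val x"
  unfolding val_def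
proof (rule SUP_least)
  fix s assume j: "j \<in> violated x"
  show "val_iter s x \<le> cost j + res_exp j (\<lambda>x. SUP s. val_iter s x) x"
  proof (cases s)
    case (Suc s')
    have "val_iter s x \<le> cost j + res_exp j (val_iter s') x"
      unfolding Suc val_iter_Suc by (rule bellman_le[OF j])
    also have "\<dots> \<le> cost j + res_exp j (\<lambda>x. SUP s. val_iter s x) x"
      by (intro add_left_mono res_exp_mono) (rule SUP_upper, simp)
    finally show ?thesis .
  qed (simp add: val_iter_0)
qed

text \<open>The minimum over the finitely many violated clauses commutes with the increasing limit.\<close>

lemma bellman_val: "bellman val x \<le> val x"
proof (cases "violated x = {}")
  case False
  have "bellman val x = Min ((\<lambda>j. SUP s. cost j + res_exp j (val_iter s) x) ` violated x)"
    unfolding bellman_def res_exp_val using False by (simp add: ennreal_SUP_add_right)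
  also have "\<dots> \<le> (SUP s. Min ((\<lambda>j. cost j + res_exp j (val_iter s) x) ` violated x))"
    using val_iter_incseq
    by (intro Min_SUP_le_SUP_Min[OF finite_violated False] incseq_SucI add_left_mono res_exp_mono)
       (auto simp: incseq_Suc_iff)
  also have "\<dots> = (SUP s. val_iter (Suc s) x)"
    unfolding val_iter_Suc bellman_def using False by simp
  also have "\<dots> \<le> val x" by (intro SUP_least val_iter_le_val)
  finally show ?thesis .
qed (simp add: bellman_satisfied)

lemma val_attained:
  assumes "violated x \<noteq> {}"
  shows "\<exists>j\<in>violated x. val x = cost j + res_exp j val x"
proof -
  obtain j where "j \<in> violated x" "bellman val x = cost j + res_exp j val x"
    using bellman_attained[OF assms] by blast
  thus ?thesis using val_le_step bellman_val[of x] by (metis antisym)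
qed

lemma val_iter_le_sum_survival: "val_iter s x \<le> (\<Sum>r<s. survival r x)"
proof (induction s arbitrary: x)
  case (Suc s)
  show ?case
  proof (cases "violated x = {}")
    case True thus ?thesis by (simp add: val_iter_Suc bellman_satisfied)
  next
    case False
    then obtain j where j: "j \<in> violated x" by blast
    have "val_iter (Suc s) x \<le> cost j + res_exp j (val_iter s) x"
      unfolding val_iter_Suc by (rule bellman_le[OF j])
    also have "\<dots> \<le> 1 + res_exp j (\<lambda>y. \<Sum>r<s. survival r y) x"
      by (intro add_mono res_exp_mono Suc.IH) (simp add: cost_def)
    also have "\<dots> \<le> 1 + (\<Sum>r<s. survival (Suc r) x)"
      unfolding res_exp_sum survival_Suc
      by (intro add_left_mono sum_mono res_exp_le_max_step[OF j])
    also have "\<dots> = (\<Sum>r<Suc s. survival r x)"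
      using False by (subst sum.lessThan_Suc_shift) (simp add: survival_0)
    finally show ?thesis .
  qed
qed (simp add: val_iter_0)

end

locale satisfiable_counted_clause = satisfiable_system + counted_clause
begin

text \<open>Resampling a clause other than k keeps k violated, so whatever the adversary does, k
  is resampled before termination.\<close>

lemma one_le_val_iter_plus_survival:
  "supported x \<Longrightarrow> k \<in> violated x \<Longrightarrow> 1 \<le> val_iter s x + survival s x"
proof (induction s arbitrary: x)
  case 0 thus ?case by (auto simp: val_iter_0 survival_0)
next
  case (Suc s)
  obtain j where j: "j \<in> violated x" "val_iter (Suc s) x = cost j + res_exp j (val_iter s) x"
    unfolding val_iter_Suc using bellman_attained Suc.prems(2) by blast
  have jm: "j < m" using violated_lt[OF j(1)] .
  show ?case
  proof (cases "j = k")
    case True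
    thus ?thesis using j(2) by (simp add: cost_def add_increasing2)
  next
    case False
    have disj: "S j \<inter> S k = {}" using violated_scopes_disjoint[OF Suc.prems(1) j(1) Suc.prems(2)] False .
    have "1 = res_exp j (\<lambda>_. 1) x" by (simp add: res_exp_const)
    also have "\<dots> \<le> res_exp j (\<lambda>y. val_iter s y + survival s y) x"
    proof (rule res_exp_mono_on)
      fix y assume y: "y \<in> set_pmf (resample D (S j) x)"
      have "k \<in> violated y" using violated_resample_disjoint[OF jm k_lt disj y] Suc.prems(2) by simp
      thus "1 \<le> val_iter s y + survival s y" by (rule Suc.IH[OF supported_resample[OF Suc.prems(1) jm y]])
    qed
    also have "\<dots> \<le> val_iter (Suc s) x + survival (Suc s) x"
      unfolding res_exp_add survival_Suc using j False
      by (intro add_mono res_exp_le_max_step) (auto simp: cost_def)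
    finally show ?thesis .
  qed
qed

lemma one_le_val: "supported x \<Longrightarrow> k \<in> violated x \<Longrightarrow> 1 \<le> val x"
proof (rule ennreal_le_epsilon)
  fix e :: real assume x: "supported x" "k \<in> violated x" and e: "0 < e"
  obtain s where s: "survival s x \<le> ennreal e" using survival_vanishes[OF x(1) e] by blast
  have "1 \<le> val_iter s x + survival s x" by (rule one_le_val_iter_plus_survival[OF x])
  also have "\<dots> \<le> val x + ennreal e" by (intro add_mono val_iter_le_val s)
  finally show "1 \<le> val x + ennreal e" .
qed

text \<open>Delaying the resampling of j behind that of another violated clause l costs nothing, as
  j stays violated and the two resamplings commute.\<close>

lemma res_exp_val_iter_Suc_swap:
  assumes "supported x" "j \<in> violated x" "l \<in> violated x" "j \<noteq> l"
  shows "cost j + res_exp j (val_iter (Suc s)) x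
           \<le> cost l + res_exp l (\<lambda>y. cost j + res_exp j (val_iter s) y) x"
proof -
  have jm: "j < m" and lm: "l < m" using assms(2,3) violated_lt by auto
  have disj: "S j \<inter> S l = {}" using violated_scopes_disjoint[OF assms] .
  have "res_exp j (val_iter (Suc s)) x \<le> res_exp j (\<lambda>y. cost l + res_exp l (val_iter s) y) x"
  proof (rule res_exp_mono_on)
    fix y assume "y \<in> set_pmf (resample D (S j) x)"
    hence "l \<in> violated y" using violated_resample_disjoint[OF jm lm disj] assms(3) by blast
    thus "val_iter (Suc s) y \<le> cost l + res_exp l (val_iter s) y"
      unfolding val_iter_Suc by (rule bellman_le)
  qed
  also have "\<dots> = cost l + res_exp l (res_exp j (val_iter s)) x"
    by (simp add: res_exp_add_const res_exp_commute[OF jm lm disj])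
  finally show ?thesis by (simp add: res_exp_add_const add_left_mono ac_simps)
qed

lemma cost_plus_res_exp_val_iter_le_val:
  "supported x \<Longrightarrow> j \<in> violated x \<Longrightarrow> cost j + res_exp j (val_iter s) x \<le> val x"
proof (induction s arbitrary: x j)
  case 0
  thus ?case using one_le_val by (auto simp: cost_def val_iter_0 res_exp_const)
next
  case (Suc s)
  obtain l where l: "l \<in> violated x" "val x = cost l + res_exp l val x"
    using val_attained Suc.prems(2) by blast
  show ?case
  proof (cases "l = j")
    case True
    thus ?thesis using l(2) by (simp add: add_left_mono res_exp_mono val_iter_le_val)
  next
    case False
    have lm: "l < m" using violated_lt[OF l(1)] .
    have "cost j + res_exp j (val_iter (Suc s)) x
            \<le> cost l + res_exp l (\<lambda>y. cost j + res_exp j (val_iter s) y) x"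
      using res_exp_val_iter_Suc_swap[OF Suc.prems l(1)] False by simp
    also have "\<dots> \<le> cost l + res_exp l val x"
    proof (intro add_left_mono res_exp_mono_on)
      fix y assume y: "y \<in> set_pmf (resample D (S l) x)"
      have "S l \<inter> S j = {}" using violated_scopes_disjoint[OF Suc.prems(1) l(1) Suc.prems(2)] False .
      hence "j \<in> violated y" using violated_resample_disjoint[OF lm _ _ y] violated_lt Suc.prems(2) by blast
      thus "cost j + res_exp j (val_iter s) y \<le> val y"
        by (rule Suc.IH[OF supported_resample[OF Suc.prems(1) lm y]])
    qed
    finally show ?thesis using l(2) by simp
  qed
qed

theorem val_harmonic:
  assumes "supported x" "j \<in> violated x"
  shows "val x = cost j + res_exp j val x"
proof (rule antisym)
  show "val x \<le> cost j + res_exp j val x" by (rule val_le_step[OF assms(2)])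
  have "cost j + res_exp j val x = (SUP s. cost j + res_exp j (val_iter s) x)"
    unfolding res_exp_val by (simp add: ennreal_SUP_add_right)
  also have "\<dots> \<le> val x" by (intro SUP_least cost_plus_res_exp_val_iter_le_val[OF assms])
  finally show "cost j + res_exp j val x \<le> val x" .
qed

definition val_bound :: real where "val_bound = real n / (1 - decay)"

lemma val_bound_eq: "real n + decay * val_bound = val_bound"
  using decay_lt_1 unfolding val_bound_def by (simp add: field_simps)

lemma sum_survival_le: "supported x \<Longrightarrow> (\<Sum>r<s. survival r x) \<le> ennreal val_bound"
proof (induction s rule: less_induct)
  case (less s)
  have "1 - decay \<le> 1" using decay_nonneg by simp
  hence n_le: "real n \<le> val_bound"
    using decay_lt_1 unfolding val_bound_def by (simp add: le_divide_eq mult_left_le)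
  have sum_le_card: "(\<Sum>r<t. survival r x) \<le> of_nat t" for t
    using sum_mono[of "{..<t}" "\<lambda>r. survival r x" "\<lambda>_. 1"] survival_le_1 by simp
  consider "s \<le> n" | "n = 0" | "n < s" "0 < n" by linarith
  thus ?case
  proof cases
    case 1
    thus ?thesis using sum_le_card[of s] n_le
      by (metis ennreal_leI ennreal_of_nat_eq_real_of_nat of_nat_mono order.trans)
  next
    case 2
    hence "decay = 0" unfolding decay_def by simp
    hence "survival (r + n) x = 0" for r using survival_shift[OF less.prems, of r] by simp
    thus ?thesis using 2 by simp
  next
    case 3
    define t where "t = s - n"
    have t: "s = n + t" "t < s" using 3 unfolding t_def by auto
    have "(\<Sum>r<s. survival r x) = (\<Sum>r<n. survival r x) + (\<Sum>r<t. survival (r + n) x)"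
      unfolding t(1) by (induction t) (simp_all add: ac_simps)
    also have "\<dots> \<le> of_nat n + (\<Sum>r<t. ennreal decay * survival r x)"
      by (intro add_mono sum_le_card sum_mono survival_shift[OF less.prems])
    also have "\<dots> \<le> of_nat n + ennreal decay * ennreal val_bound"
      unfolding sum_distrib_left[symmetric]
      by (intro add_left_mono mult_left_mono less.IH[OF t(2) less.prems]) auto
    also have "\<dots> = ennreal val_bound"
      using decay_nonneg val_bound_eq n_le
      by (simp add: ennreal_mult[symmetric] ennreal_of_nat_eq_real_of_nat ennreal_plus[symmetric]
               del: ennreal_plus)
    finally show ?thesis .
  qed
qed

lemma val_le_bound: "supported x \<Longrightarrow> val x \<le> ennreal val_bound"
  unfolding val_def by (intro SUP_least order.trans[OF val_iter_le_sum_survival sum_survival_le])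

definition mean_val :: ennreal where "mean_val = (\<integral>\<^sup>+x. val x \<partial>prod_dist n D)"

lemma mean_val_le_bound: "mean_val \<le> ennreal val_bound"
proof -
  have "mean_val \<le> (\<integral>\<^sup>+x. ennreal val_bound \<partial>prod_dist n D)"
    unfolding mean_val_def by (intro nn_integral_mono_AE AE_pmfI val_le_bound supported_prod_dist)
  thus ?thesis by (simp add: measure_pmf.emeasure_space_1)
qed

lemma val_ind_viol_insert:
  assumes "supported x" "insert j I \<in> indep_sets m S" "j \<notin> I"
  shows "val x * ind_viol (insert j I) x
           = cost j * ind_viol (insert j I) x + ind_viol {j} x * res_exp j (\<lambda>y. val y * ind_viol I y) x"
proof -
  have "res_exp j (\<lambda>y. val y * ind_viol I y) x = res_exp j (\<lambda>y. ind_viol I x * val y) x"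
    using ind_viol_resample[OF assms(2), of j] assms(3) by (intro res_exp_cong_on) (simp add: mult.commute)
  hence res: "res_exp j (\<lambda>y. val y * ind_viol I y) x = ind_viol I x * res_exp j val x"
    by (simp add: res_exp_cmult)
  have split: "ind_viol (insert j I) x = ind_viol {j} x * ind_viol I x"
    using ind_viol_remove[of j "insert j I"] assms(3) by simp
  show ?thesis
  proof (cases "j \<in> violated x")
    case True
    thus ?thesis unfolding res split using val_harmonic[OF assms(1) True]
      by (simp add: ind_viol_def algebra_simps)
  qed (simp add: split ind_viol_def)
qed

lemma integral_val_ind_viol:
  "I \<in> indep_sets m S \<Longrightarrow> (\<integral>\<^sup>+x. val x * ind_viol I x \<partial>prod_dist n D)
      = ennreal (p_set I) * (mean_val + (if k \<in> I then 1 else 0))"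
proof (induction I rule: infinite_finite_induct)
  case (infinite I) thus ?case using finite_indep_set by blast
next
  case empty thus ?case by (simp add: ind_viol_def p_set_def mean_val_def)
next
  case (insert j I)
  let ?P = "prod_dist n D"
  have I: "I \<in> indep_sets m S" using insert.prems unfolding indep_sets_def by blast
  have jm: "j < m" using indep_set_lt insert.prems by blast
  have p: "ennreal (p_set (insert j I)) = ennreal (p_clause n phi D j) * ennreal (p_set I)"
    using insert.hyps by (simp add: p_set_def ennreal_mult[symmetric] p_clause_nonneg prod_nonneg)
  have "(\<integral>\<^sup>+x. val x * ind_viol (insert j I) x \<partial>?P)
      = (\<integral>\<^sup>+x. cost j * ind_viol (insert j I) x + ind_viol {j} x * res_exp j (\<lambda>y. val y * ind_viol I y) x \<partial>?P)"
    using val_ind_viol_insert insert.prems insert.hyps supported_prod_dist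
    by (intro nn_integral_cong_AE AE_pmfI) auto
  also have "\<dots> = cost j * ennreal (p_set (insert j I))
                   + ennreal (p_clause n phi D j) * (\<integral>\<^sup>+x. val x * ind_viol I x \<partial>?P)"
    using integral_ind_viol[OF insert.prems] integral_ind_viol_res_exp[OF jm]
    by (simp add: nn_integral_add nn_integral_cmult)
  also have "\<dots> = ennreal (p_set (insert j I)) * (mean_val + (if k \<in> insert j I then 1 else 0))"
    unfolding insert.IH[OF I] p using insert.hyps by (auto simp: cost_def algebra_simps)
  finally show ?case .
qed

lemma sum_integral_val_ind_viol_even_odd:
  "(\<Sum>I\<in>even_indep. \<integral>\<^sup>+x. val x * ind_viol I x \<partial>prod_dist n D)
     = (\<Sum>I\<in>odd_indep. \<integral>\<^sup>+x. val x * ind_viol I x \<partial>prod_dist n D)"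
proof -
  have "val x * (\<Sum>I\<in>even_indep. ind_viol I x) = val x * (\<Sum>I\<in>odd_indep. ind_viol I x)"
    if "supported x" for x
    using sum_ind_viol_even[OF that] val_satisfied by (cases "violated x = {}") auto
  hence "(\<integral>\<^sup>+x. (\<Sum>I\<in>even_indep. val x * ind_viol I x) \<partial>prod_dist n D)
           = (\<integral>\<^sup>+x. (\<Sum>I\<in>odd_indep. val x * ind_viol I x) \<partial>prod_dist n D)"
    using supported_prod_dist by (intro nn_integral_cong_AE AE_pmfI) (simp add: sum_distrib_left)
  thus ?thesis by (simp add: nn_integral_sum)
qed

lemma q_coeff_single:
  "q_coeff n m phi S D {k} = (\<Sum>I\<in>odd_indep. p_set I * (if k \<in> I then 1 else 0))
                           - (\<Sum>I\<in>even_indep. p_set I * (if k \<in> I then 1 else 0))"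
proof -
  have "q_coeff n m phi S D {k}
          = (\<Sum>I\<in>indep_sets m S. (-1) ^ card I * (- p_set I * (if k \<in> I then 1 else 0)))"
  proof -
    have "q_coeff n m phi S D {k}
            = (\<Sum>I\<in>indep_sets m S. if k \<in> I then (-1) ^ card (I - {k}) * p_set I else 0)"
      unfolding q_coeff_def p_set_def using finite_indep_sets by (simp add: sum.inter_filter[symmetric])
    also have "\<dots> = (\<Sum>I\<in>indep_sets m S. (-1) ^ card I * (- p_set I * (if k \<in> I then 1 else 0)))"
    proof (intro sum.cong refl)
      fix I assume I: "I \<in> indep_sets m S"
      show "(if k \<in> I then (-1) ^ card (I - {k}) * p_set I else 0)
              = (-1) ^ card I * (- p_set I * (if k \<in> I then 1 else 0))"
      proof (cases "k \<in> I")
        case True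
        hence "card I = Suc (card (I - {k}))" using card_Suc_Diff1 finite_indep_set[OF I] by metis
        hence "(-1::real) ^ card I = - ((-1) ^ card (I - {k}))" by simp
        thus ?thesis using True by simp
      qed simp
    qed
    finally show ?thesis .
  qed
  also have "\<dots> = (\<Sum>I\<in>odd_indep. p_set I * (if k \<in> I then 1 else 0))
                 - (\<Sum>I\<in>even_indep. p_set I * (if k \<in> I then 1 else 0))"
    unfolding sum_signed_card[OF finite_indep_sets] even_indep_def odd_indep_def
    by (simp add: sum_negf)
  finally show ?thesis .
qed

theorem mean_val_eq: "mean_val = ennreal (q_coeff n m phi S D {k} / q_coeff n m phi S D {})"
proof -
  obtain c where c: "mean_val = ennreal c" "c \<ge> 0"
    using mean_val_le_bound by (cases mean_val rule: ennreal_cases) (auto simp: top_unique)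
  define w where "w I = p_set I * (c + (if k \<in> I then 1 else 0))" for I
  have w: "\<integral>\<^sup>+x. val x * ind_viol I x \<partial>prod_dist n D = ennreal (w I)" if "I \<in> indep_sets m S" for I
    using integral_val_ind_viol[OF that] c p_set_nonneg by (simp add: w_def ennreal_mult)
  have w_nonneg: "w I \<ge> 0" for I using c(2) p_set_nonneg by (simp add: w_def)
  have "ennreal (\<Sum>I\<in>even_indep. w I) = ennreal (\<Sum>I\<in>odd_indep. w I)"
    using sum_integral_val_ind_viol_even_odd w w_nonneg
    by (simp add: even_indep_def odd_indep_def sum_ennreal)
  hence "(\<Sum>I\<in>even_indep. w I) = (\<Sum>I\<in>odd_indep. w I)"
    by (simp add: sum_nonneg w_nonneg)
  hence "c * q_coeff n m phi S D {} = q_coeff n m phi S D {k}"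
    unfolding q_coeff_empty q_coeff_single w_def
    by (simp add: algebra_simps sum.distrib sum_distrib_left)
  moreover have "q_coeff n m phi S D {} > 0" using q_coeff_empty_eq_prob sat by simp
  ultimately have "c = q_coeff n m phi S D {k} / q_coeff n m phi S D {}"
    by (auto simp: field_simps)
  thus ?thesis using c(1) by simp
qed

section \<open>Runs of PRS\<close>

definition k_count :: "'a hist \<Rightarrow> ennreal" where
  "k_count h = of_nat (count_list (map fst (snd h)) k)"

lemma prs_step_satisfied: "Phi m phi (cur_asg h) \<Longrightarrow> prs_step m phi S D sel h = return_pmf h"
  unfolding prs_step_def by simp

lemma nn_integral_prs_step:
  assumes "\<not> Phi m phi (cur_asg h)"
  shows "(\<integral>\<^sup>+h'. k_count h' + W (cur_asg h') \<partial>prs_step m phi S D sel h)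
           = (\<integral>\<^sup>+j. k_count h + cost j + res_exp j W (cur_asg h) \<partial>sel h)"
proof -
  have count: "k_count (fst h, (j, x') # snd h) = k_count h + cost j" for j x'
    unfolding k_count_def cost_def by simp
  have cur: "cur_asg (fst h, (j, x') # snd h) = x'" for j x'
    unfolding cur_asg_def by simp
  have inner: "(\<integral>\<^sup>+y. k_count h + (cost j + W y) \<partial>resample D (S j) (cur_asg h))
                 = k_count h + (cost j + res_exp j W (cur_asg h))" for j
    using res_exp_add_const[of j "k_count h" "\<lambda>y. cost j + W y"] res_exp_add_const[of j "cost j" W]
    unfolding res_exp_def by simp
  have "prs_step m phi S D sel h = bind_pmf (sel h)
          (\<lambda>j. map_pmf (\<lambda>x'. (fst h, (j, x') # snd h)) (resample D (S j) (cur_asg h)))"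
    using assms unfolding prs_step_def by (simp add: map_pmf_def)
  thus ?thesis
    by (simp add: count cur inner add.assoc)
qed

lemma nn_integral_prs_run_0:
  "(\<integral>\<^sup>+h. k_count h + W (cur_asg h) \<partial>prs_run n m phi S D sel 0) = (\<integral>\<^sup>+x. W x \<partial>prod_dist n D)"
  by (simp add: k_count_def cur_asg_def)

context
  fixes sel :: "'a hist \<Rightarrow> nat pmf"
  assumes sel_valid: "\<And>h. \<not> Phi m phi (cur_asg h) \<Longrightarrow>
                       \<forall>j\<in>set_pmf (sel h). j < m \<and> \<not> phi j (cur_asg h)"
begin

lemma sel_violated: "\<not> Phi m phi (cur_asg h) \<Longrightarrow> j \<in> set_pmf (sel h) \<Longrightarrow> j \<in> violated (cur_asg h)"
  using sel_valid unfolding violated_def by blast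

lemma supported_prs_run: "h \<in> set_pmf (prs_run n m phi S D sel t) \<Longrightarrow> supported (cur_asg h)"
proof (induction t arbitrary: h)
  case 0 thus ?case using supported_prod_dist by (auto simp: cur_asg_def)
next
  case (Suc t)
  then obtain h0 where h0: "h0 \<in> set_pmf (prs_run n m phi S D sel t)"
    "h \<in> set_pmf (prs_step m phi S D sel h0)" by auto
  show ?case
  proof (cases "Phi m phi (cur_asg h0)")
    case True thus ?thesis using h0 Suc.IH by (simp add: prs_step_satisfied)
  next
    case False
    then obtain j x' where j: "j \<in> set_pmf (sel h0)"
      and x': "x' \<in> set_pmf (resample D (S j) (cur_asg h0))" and h: "h = (fst h0, (j, x') # snd h0)"
      using h0(2) unfolding prs_step_def by auto
    have "cur_asg h = x'" unfolding h cur_asg_def by simp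
    thus ?thesis
      using supported_resample[OF Suc.IH[OF h0(1)] violated_lt[OF sel_violated[OF False j]] x'] by simp
  qed
qed

text \<open>By val_harmonic, whichever clause is selected, k_count plus val of the current
  assignment is a martingale.\<close>

lemma nn_integral_prs_run_k_count_val:
  "(\<integral>\<^sup>+h. k_count h + val (cur_asg h) \<partial>prs_run n m phi S D sel t) = mean_val"
proof (induction t)
  case 0 show ?case unfolding mean_val_def by (rule nn_integral_prs_run_0)
next
  case (Suc t)
  have "(\<integral>\<^sup>+h'. k_count h' + val (cur_asg h') \<partial>prs_step m phi S D sel h) = k_count h + val (cur_asg h)"
    if h: "h \<in> set_pmf (prs_run n m phi S D sel t)" for h
  proof (cases "Phi m phi (cur_asg h)")
    case False
    have "(\<integral>\<^sup>+j. k_count h + cost j + res_exp j val (cur_asg h) \<partial>sel h)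
            = (\<integral>\<^sup>+j. k_count h + val (cur_asg h) \<partial>sel h)"
      using val_harmonic[OF supported_prs_run[OF h] sel_violated[OF False]]
      by (intro nn_integral_cong_AE AE_pmfI) (simp add: add.assoc)
    thus ?thesis using nn_integral_prs_step[OF False] by (simp add: measure_pmf.emeasure_space_1)
  qed (simp add: prs_step_satisfied)
  hence "(\<integral>\<^sup>+h. k_count h + val (cur_asg h) \<partial>prs_run n m phi S D sel (Suc t))
           = (\<integral>\<^sup>+h. k_count h + val (cur_asg h) \<partial>prs_run n m phi S D sel t)"
    by (simp only: prs_run.simps nn_integral_bind_pmf) (intro nn_integral_cong_AE AE_pmfI, simp)
  thus ?case using Suc.IH by simp
qed

lemma nn_integral_val_iter_le_prs_run:
  "(\<integral>\<^sup>+x. val_iter (s + t) x \<partial>prod_dist n D)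
     \<le> (\<integral>\<^sup>+h. k_count h + val_iter s (cur_asg h) \<partial>prs_run n m phi S D sel t)"
proof (induction t arbitrary: s)
  case 0 thus ?case by (simp add: k_count_def cur_asg_def)
next
  case (Suc t)
  have "k_count h + val_iter (Suc s) (cur_asg h)
          \<le> (\<integral>\<^sup>+h'. k_count h' + val_iter s (cur_asg h') \<partial>prs_step m phi S D sel h)" for h
  proof (cases "Phi m phi (cur_asg h)")
    case True thus ?thesis
      by (simp add: prs_step_satisfied val_iter_Suc bellman_satisfied Phi_iff_violated_empty)
  next
    case False
    have "k_count h + val_iter (Suc s) (cur_asg h) = (\<integral>\<^sup>+j. k_count h + val_iter (Suc s) (cur_asg h) \<partial>sel h)"
      by (simp add: measure_pmf.emeasure_space_1)
    also have "\<dots> \<le> (\<integral>\<^sup>+j. k_count h + cost j + res_exp j (val_iter s) (cur_asg h) \<partial>sel h)"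
      using bellman_le sel_violated[OF False] unfolding val_iter_Suc
      by (intro nn_integral_mono_AE AE_pmfI) (simp add: add.assoc add_left_mono)
    finally show ?thesis using nn_integral_prs_step[OF False] by simp
  qed
  hence "(\<integral>\<^sup>+h. k_count h + val_iter (Suc s) (cur_asg h) \<partial>prs_run n m phi S D sel t)
           \<le> (\<integral>\<^sup>+h. k_count h + val_iter s (cur_asg h) \<partial>prs_run n m phi S D sel (Suc t))"
    by (simp only: prs_run.simps nn_integral_bind_pmf) (intro nn_integral_mono)
  thus ?case using Suc.IH[of "Suc s"] by simp
qed

theorem expected_resamplings_eq_mean_val: "expected_resamplings n m phi S D sel k = mean_val"
proof (rule antisym)
  show "expected_resamplings n m phi S D sel k \<le> mean_val"
    unfolding expected_resamplings_def
  proof (intro SUP_least)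
    fix t
    have "(\<integral>\<^sup>+h. k_count h \<partial>prs_run n m phi S D sel t)
            \<le> (\<integral>\<^sup>+h. k_count h + val (cur_asg h) \<partial>prs_run n m phi S D sel t)"
      by (intro nn_integral_mono) simp
    thus "(\<integral>\<^sup>+h. of_nat (count_list (map fst (snd h)) k) \<partial>prs_run n m phi S D sel t) \<le> mean_val"
      using nn_integral_prs_run_k_count_val[of t] unfolding k_count_def by simp
  qed
  have "mean_val = (SUP t. \<integral>\<^sup>+x. val_iter t x \<partial>prod_dist n D)"
    unfolding mean_val_def val_def using val_iter_incseq
    by (intro nn_integral_monotone_convergence_SUP) (auto simp: incseq_def le_fun_def)
  also have "\<dots> \<le> expected_resamplings n m phi S D sel k"
    unfolding expected_resamplings_def
    using nn_integral_val_iter_le_prs_run[of 0] by (intro SUP_mono) (auto simp: val_iter_0 k_count_def)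
  finally show "mean_val \<le> expected_resamplings n m phi S D sel k" .
qed

end

end

theorem theorem3:
  fixes n m :: nat
    and Dom :: "nat \<Rightarrow> 'a set"
    and D :: "nat \<Rightarrow> 'a pmf"
    and phi :: "nat \<Rightarrow> 'a asg \<Rightarrow> bool"
    and S :: "nat \<Rightarrow> nat set"
    and sel :: "'a hist \<Rightarrow> nat pmf"
    and k :: nat
  assumes dom_countable: "\<And>i. i < n \<Longrightarrow> countable (Dom i)"
    and dist_on_dom: "\<And>i. i < n \<Longrightarrow> set_pmf (D i) \<subseteq> Dom i"
    and scope_sub: "\<And>j. j < m \<Longrightarrow> S j \<subseteq> {..<n}"
    and scope_ne: "\<And>j. j < m \<Longrightarrow> S j \<noteq> {}"
    and scope_dep: "\<And>j x y. j < m \<Longrightarrow> (\<forall>i\<in>S j. x i = y i) \<Longrightarrow> phi j x = phi j y"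
    and extr: "extremal n m phi S Dom"
    and sat: "measure_pmf.prob (prod_dist n D) {x. Phi m phi x} > 0"
    and sel_valid: "\<And>h. \<not> Phi m phi (cur_asg h) \<Longrightarrow>
                       \<forall>j\<in>set_pmf (sel h). j < m \<and> \<not> phi j (cur_asg h)"
    and k_lt: "k < m"
  shows "expected_resamplings n m phi S D sel k
           = ennreal (q_coeff n m phi S D {k} / q_coeff n m phi S D {})"
proof -
  interpret satisfiable_counted_clause n m Dom D phi S k
    by unfold_locales (use dist_on_dom scope_sub scope_dep extr sat k_lt in auto)
  show ?thesis using expected_resamplings_eq_mean_val[OF sel_valid] mean_val_eq by simp
qed

end
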